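(* For every integer $L\geq 0$, \[ \sum_{j=-\infty}^{\infty} (-1)^j q^{j^2} \left(\frac{j+1}{3}\right) {2L+1 \brack L-j}_{q^2} = \frac{(q^3;q^6)_L}{(q;q^2)_L}. \]
   Context: For a variable $a$ and integer $n\ge 0$, $(a;q)_n=(1-a)(1-aq)\cdots(1-aq^{n-1})$ (with $(a;q)_0=1$). The $q$-binomial coefficient is ${A \brack B}_q=\frac{(q;q)_A}{(q;q)_B(q;q)_{A-B}}$ if $0\le B\le A$ are integers, and $0$ otherwise; ${A\brack B}_{q^2}$ is the same with $q$ replaced by $q^2$. $\left(\frac{j}{3}\right)$ is the Legendre symbol modulo 3: it equals $1$ if $j\equiv 1 \pmod 3$, $-1$ if $j\equiv -1\pmod 3$, and $0$ if $3\mid j$. *)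

theory Defs
  imports "HOL-Computational_Algebra.Formal_Power_Series"
begin

definition qpoch :: "'a::comm_ring_1 \<Rightarrow> 'a \<Rightarrow> nat \<Rightarrow> 'a" where
  "qpoch a q n = (\<Prod>k<n. (1 - a * q ^ k))"

definition qbinom :: "'a::{comm_ring_1,inverse} \<Rightarrow> int \<Rightarrow> int \<Rightarrow> 'a" where
  "qbinom q A B = (if 0 \<le> B \<and> B \<le> A
     then qpoch q q (nat A) / (qpoch q q (nat B) * qpoch q q (nat (A - B))) else 0)"

definition legendre3 :: "int \<Rightarrow> int" where
  "legendre3 j = (if j mod 3 = 1 then 1 else if j mod 3 = 2 then -1 else 0)"

end

theory Submission
  imports Defs
begin

(* The q-binomial theorem, applied to the product of z q^(2L+1) - q^(2m+2) over m <= 2L,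
   gives the finite Jacobi triple product
     sum_j (-1)^j q^(j^2) [2L+1, L-j]_(q^2) z^(j+L+1)
       = prod_(i<=L) (z - q^(2i+1)) * prod_(i<L) (1 - z q^(2i+1)).
   Put z = \<omega>, a primitive cube root of unity. Since (\<omega> - x)(1 - \<omega> x)\<omega>^2 = 1 + x + x^2,
   multiplying by \<omega>^(2L) turns the right-hand side into
   (\<omega> - q^(2L+1)) * prod_(i<L) (1 + q^(2i+1) + q^(4i+2)), whose \<omega>-coefficient is the
   product itself, while the \<omega>-coefficient of \<omega>^n is the Legendre symbol (n/3).
   Finally 1 + y + y^2 = (1 - y^3)/(1 - y) with y = q^(2i+1) gives (q^3;q^6)_L/(q;q^2)_L. *)

(* Eis a b stands for a + b\<omega> in R[\<omega>] = R[t]/(t^2 + t + 1), so \<omega>^2 = -1 - \<omega>. *)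
datatype 'a eis = Eis (eis_re: 'a) (eis_om: 'a)

instantiation eis :: (comm_ring_1) comm_ring_1
begin
definition "0 = Eis 0 0"
definition "1 = Eis 1 0"
definition "x + y = Eis (eis_re x + eis_re y) (eis_om x + eis_om y)"
definition "x - y = Eis (eis_re x - eis_re y) (eis_om x - eis_om y)"
definition "- x = Eis (- eis_re x) (- eis_om x)"
definition "x * y = Eis (eis_re x * eis_re y - eis_om x * eis_om y)
  (eis_re x * eis_om y + eis_om x * eis_re y - eis_om x * eis_om y)"
instance
  by standard (auto simp: zero_eis_def one_eis_def plus_eis_def minus_eis_def uminus_eis_def
      times_eis_def eis.expand algebra_simps)
end

definition eis_of :: "'a::comm_ring_1 \<Rightarrow> 'a eis" where
  "eis_of a = Eis a 0"

definition eis_omega :: "'a::comm_ring_1 eis" where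
  "eis_omega = Eis 0 1"

lemma eis_of_0 [simp]: "eis_of 0 = 0"
  and eis_of_1 [simp]: "eis_of 1 = 1"
  and eis_of_add [simp]: "eis_of (a + b) = eis_of a + eis_of b"
  and eis_of_diff [simp]: "eis_of (a - b) = eis_of a - eis_of b"
  and eis_of_minus [simp]: "eis_of (- a) = - eis_of a"
  and eis_of_mult [simp]: "eis_of (a * b) = eis_of a * eis_of b"
  by (simp_all add: eis_of_def zero_eis_def one_eis_def plus_eis_def minus_eis_def
      uminus_eis_def times_eis_def)

lemma eis_of_power [simp]: "eis_of (a ^ n) = eis_of a ^ n"
  by (induction n) simp_all

lemma eis_of_prod: "eis_of (prod f A) = (\<Prod>x\<in>A. eis_of (f x))"
  by (induction A rule: infinite_finite_induct) simp_all

lemma eis_om_sum: "eis_om (sum f A) = (\<Sum>x\<in>A. eis_om (f x))"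
  by (induction A rule: infinite_finite_induct) (simp_all add: zero_eis_def plus_eis_def)

lemma eis_om_eis_of_mult [simp]: "eis_om (eis_of a * w) = a * eis_om w"
  by (simp add: eis_of_def times_eis_def)

lemma eis_om_omega_minus_mult: "eis_om ((eis_omega - eis_of a) * eis_of b) = b"
  by (simp add: eis_omega_def eis_of_def times_eis_def minus_eis_def)

lemma eis_omega_power:
  "(eis_omega :: 'a::comm_ring_1 eis) ^ n =
     (if n mod 3 = 0 then 1 else if n mod 3 = 1 then eis_omega else Eis (-1) (-1))"
proof (induction n)
  case (Suc n)
  have "n mod 3 = 0 \<or> n mod 3 = 1 \<or> n mod 3 = 2" by auto
  with Suc show ?case
    by (auto simp: mod_Suc eis_omega_def times_eis_def one_eis_def)
qed simp

lemma eis_om_omega_power: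
  "eis_om ((eis_omega :: 'a::comm_ring_1 eis) ^ n) = of_int (legendre3 (int n))"
proof -
  have "n mod 3 = 0 \<or> n mod 3 = 1 \<or> n mod 3 = 2" by auto
  moreover have "int n mod 3 = int (n mod 3)" by (simp add: zmod_int)
  ultimately show ?thesis
    unfolding eis_omega_power by (auto simp: legendre3_def eis_omega_def one_eis_def)
qed

lemma eis_omega_factor_pair:
  "(eis_omega - eis_of x) * (1 - eis_omega * eis_of x) * eis_omega ^ 2 = eis_of (1 + x + x ^ 2)"
  by (simp add: eis_omega_def eis_of_def times_eis_def minus_eis_def one_eis_def plus_eis_def
      power2_eq_square algebra_simps)

(* The q-Pascal recurrence defines Gaussian binomials without division, so they make sense
   in every commutative ring, in particular in R[\<omega>]. *)
fun gauss_binom :: "'a::comm_ring_1 \<Rightarrow> nat \<Rightarrow> nat \<Rightarrow> 'a" where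
  "gauss_binom p n 0 = 1"
| "gauss_binom p 0 (Suc k) = 0"
| "gauss_binom p (Suc n) (Suc k) = gauss_binom p n k + p ^ Suc k * gauss_binom p n (Suc k)"

lemma gauss_binom_eq_0: "n < k \<Longrightarrow> gauss_binom p n k = 0"
  by (induction p n k rule: gauss_binom.induct) simp_all

lemma gauss_binom_self [simp]: "gauss_binom p n n = 1"
  by (induction n) (simp_all add: gauss_binom_eq_0)

lemma eis_of_gauss_binom [simp]: "eis_of (gauss_binom p n k) = gauss_binom (eis_of p) n k"
  by (induction "eis_of p" n k rule: gauss_binom.induct) simp_all

lemma qpoch_Suc: "qpoch a q (Suc n) = qpoch a q n * (1 - a * q ^ n)"
  by (simp add: qpoch_def)

lemma gauss_binom_mult_qpoch:
  "gauss_binom p (m + k) k * (qpoch p p k * qpoch p p m) = qpoch p p (m + k)"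
proof (induction k arbitrary: m)
  case 0
  show ?case by (simp add: qpoch_def)
next
  case (Suc k)
  note outer_IH = Suc.IH
  show ?case
  proof (induction m)
    case 0
    show ?case by (simp add: qpoch_def)
  next
    case (Suc m)
    define Q where "Q = qpoch p p (m + Suc k)"
    have "gauss_binom p (Suc m + k) k * (qpoch p p (Suc k) * qpoch p p (Suc m))
        = gauss_binom p (Suc m + k) k * (qpoch p p k * qpoch p p (Suc m)) * (1 - p ^ Suc k)"
      by (simp only: qpoch_Suc power_Suc ac_simps)
    also have "\<dots> = Q * (1 - p ^ Suc k)"
      using outer_IH[of "Suc m"] by (simp add: Q_def)
    finally have left: "gauss_binom p (m + Suc k) k * (qpoch p p (Suc k) * qpoch p p (Suc m))
        = Q * (1 - p ^ Suc k)"
      by (simp only: add_Suc add_Suc_right)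
    have "p ^ Suc k * gauss_binom p (m + Suc k) (Suc k) * (qpoch p p (Suc k) * qpoch p p (Suc m))
        = p ^ Suc k * (gauss_binom p (m + Suc k) (Suc k) * (qpoch p p (Suc k) * qpoch p p m))
          * (1 - p ^ Suc m)"
      by (simp only: qpoch_Suc power_Suc ac_simps)
    also have "\<dots> = p ^ Suc k * Q * (1 - p ^ Suc m)"
      by (simp only: Suc.IH Q_def)
    finally have right: "p ^ Suc k * gauss_binom p (m + Suc k) (Suc k)
        * (qpoch p p (Suc k) * qpoch p p (Suc m)) = p ^ Suc k * Q * (1 - p ^ Suc m)" .
    have "p ^ Suc k * (1 - p ^ Suc m) = p ^ Suc k - p * p ^ (m + Suc k)"
      by (simp add: algebra_simps power_add)
    then have "Q * (1 - p ^ Suc k) + p ^ Suc k * Q * (1 - p ^ Suc m) = Q * (1 - p * p ^ (m + Suc k))"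
      by (simp add: algebra_simps)
    with left right show ?case
      by (simp add: Q_def qpoch_Suc distrib_right)
  qed
qed

lemma Suc_choose_two: "Suc k choose 2 = (k choose 2) + k"
  by (simp add: numeral_2_eq_2)

lemma q_binomial:
  "(\<Prod>m<n. y + x * p ^ m) = (\<Sum>k\<le>n. gauss_binom p n k * p ^ (k choose 2) * x ^ k * y ^ (n - k))"
proof (induction n arbitrary: x)
  case 0
  show ?case by (simp add: binomial_eq_0)
next
  case (Suc n)
  define a where "a k = gauss_binom p n k * p ^ (Suc k choose 2) * x ^ k * y ^ (Suc n - k)" for k
  define b where "b k = gauss_binom p n k * p ^ (Suc k choose 2) * x ^ Suc k * y ^ (n - k)" for k
  have "(\<Prod>m<Suc n. y + x * p ^ m) = (y + x) * (\<Prod>m<n. y + (x * p) * p ^ m)"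
    by (subst prod.lessThan_Suc_shift) (simp add: mult.assoc)
  also have "\<dots> = (y + x) * (\<Sum>k\<le>n. gauss_binom p n k * p ^ (k choose 2) * (x * p) ^ k * y ^ (n - k))"
    using Suc by simp
  also have "\<dots> = (\<Sum>k\<le>n. y * (gauss_binom p n k * p ^ (k choose 2) * (x * p) ^ k * y ^ (n - k)))
      + (\<Sum>k\<le>n. x * (gauss_binom p n k * p ^ (k choose 2) * (x * p) ^ k * y ^ (n - k)))"
    by (simp only: distrib_right sum_distrib_left sum.distrib)
  also have "\<dots> = (\<Sum>k\<le>n. a k) + (\<Sum>k\<le>n. b k)"
    unfolding a_def b_def
    by (intro arg_cong2[where f="(+)"] sum.cong refl)
       (auto simp: Suc_choose_two power_add power_mult_distrib Suc_diff_le algebra_simps)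
  also have "(\<Sum>k\<le>n. a k) = a 0 + (\<Sum>k\<le>n. a (Suc k))"
    using sum.atMost_Suc_shift[of a n] by (simp add: a_def gauss_binom_eq_0)
  also have "a 0 + (\<Sum>k\<le>n. a (Suc k)) + (\<Sum>k\<le>n. b k) = a 0 + (\<Sum>k\<le>n. a (Suc k) + b k)"
    by (simp add: sum.distrib add.assoc)
  also have "\<dots> = (\<Sum>k\<le>Suc n. gauss_binom p (Suc n) k * p ^ (k choose 2) * x ^ k * y ^ (Suc n - k))"
    unfolding sum.atMost_Suc_shift[of "\<lambda>k. gauss_binom p (Suc n) k * p ^ (k choose 2) * x ^ k * y ^ (Suc n - k)"]
    by (intro arg_cong2[where f="(+)"] sum.cong refl)
       (simp_all add: a_def b_def Suc_choose_two algebra_simps power_add binomial_eq_0)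
  finally show ?case .
qed

lemma prod_shifted_even_powers_split:
  fixes q z :: "'a::comm_ring_1"
  shows "(\<Prod>m<2*L+1. z * q^(2*L+1) - q^(2*m+2)) =
    (-1)^L * q^((L+1)*(3*L+1)) * ((\<Prod>i\<le>L. z - q^(2*i+1)) * (\<Prod>i<L. 1 - z * q^(2*i+1)))"
proof (induction L)
  case 0
  show ?case by (simp add: algebra_simps power2_eq_square)
next
  case (Suc L)
  have shift: "z * q^(2*Suc L+1) - q^(2*Suc m+2) = q^2 * (z * q^(2*L+1) - q^(2*m+2))" for m
    by (simp add: algebra_simps power_add power2_eq_square)
  have first: "z * q^(2*Suc L+1) - q^(2*0+2) = -(q^2) * (1 - z * q^(2*L+1))"
    by (simp add: algebra_simps power_add power2_eq_square)
  have last: "z * q^(2*L+1) - q^(2*(2*L+1)+2) = q^(2*L+1) * (z - q^(2*Suc L+1))"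
  proof -
    have "2*(2*L+1)+2 = (2*L+1) + (2*Suc L+1)" by simp
    then show ?thesis by (simp only: power_add right_diff_distrib mult.commute)
  qed
  have exponent: "(Suc L+1)*(3*Suc L+1) = 2 + 2 * Suc (2*L+1) + (2*L+1) + (L+1)*(3*L+1)"
    by (simp add: algebra_simps)
  have "(\<Prod>m<2*Suc L+1. z * q^(2*Suc L+1) - q^(2*m+2))
      = (z * q^(2*Suc L+1) - q^(2*0+2)) * (\<Prod>m<Suc (2*L+1). q^2 * (z * q^(2*L+1) - q^(2*m+2)))"
    using prod.lessThan_Suc_shift[of "\<lambda>m. z * q^(2*Suc L+1) - q^(2*m+2)" "Suc (2*L+1)"]
    by (simp only: shift) simp
  also have "\<dots> = -(q^2) * (1 - z * q^(2*L+1)) * (q^2)^Suc (2*L+1)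
      * (\<Prod>m<Suc (2*L+1). z * q^(2*L+1) - q^(2*m+2))"
    by (simp only: first prod.distrib prod_constant card_lessThan mult.assoc)
  also have "\<dots> = -(q^2) * (1 - z * q^(2*L+1)) * (q^2)^Suc (2*L+1)
      * ((\<Prod>m<2*L+1. z * q^(2*L+1) - q^(2*m+2)) * (q^(2*L+1) * (z - q^(2*Suc L+1))))"
    by (simp only: prod.lessThan_Suc last)
  also have "\<dots> = (-1)^Suc L * (q^2 * (q^2)^Suc (2*L+1) * q^(2*L+1) * q^((L+1)*(3*L+1)))
      * (((\<Prod>i\<le>L. z - q^(2*i+1)) * (z - q^(2*Suc L+1)))
        * ((\<Prod>i<L. 1 - z * q^(2*i+1)) * (1 - z * q^(2*L+1))))"
    unfolding Suc by (simp add: ac_simps)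
  also have "\<dots> = (-1)^Suc L * q^((Suc L+1)*(3*Suc L+1))
      * ((\<Prod>i\<le>Suc L. z - q^(2*i+1)) * (\<Prod>i<Suc L. 1 - z * q^(2*i+1)))"
    unfolding exponent power_add power_mult prod.atMost_Suc prod.lessThan_Suc ..
  finally show ?case .
qed

lemma two_mult_choose_two: "2 * (k choose 2) = k * (k - 1)"
  by (induction k) (auto simp: Suc_choose_two algebra_simps)

lemma triple_product_exponent:
  assumes "k \<le> 2*L+1"
  shows "2 * (k choose 2) + 2*k + (2*L+1)*(2*L+1-k) = (L+1)*(3*L+1) + nat ((int L - int k)^2)"
proof -
  have "int (2 * (k choose 2)) = int k * (int k - 1)"
    unfolding two_mult_choose_two by (cases k) (simp_all add: algebra_simps)
  moreover have "int ((2*L+1)*(2*L+1-k)) = (2*int L+1)*(2*int L+1-int k)"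
    unfolding of_nat_mult of_nat_diff[OF assms] by (simp add: ac_simps)
  moreover have "int (nat ((int L - int k)^2)) = (int L - int k)^2"
    by simp
  ultimately have "int (2 * (k choose 2) + 2*k + (2*L+1)*(2*L+1-k))
      = int ((L+1)*(3*L+1) + nat ((int L - int k)^2))"
    unfolding of_nat_add by (simp add: algebra_simps power2_eq_square)
  then show ?thesis
    by (simp only: of_nat_eq_iff)
qed

lemma triple_product_term:
  fixes q z :: "'a::comm_ring_1"
  assumes "k \<le> 2*L+1"
  shows "(q^2)^(k choose 2) * (-(q^2))^k * (z * q^(2*L+1))^(2*L+1-k)
    = (-1)^k * (q^((L+1)*(3*L+1)) * q^nat ((int L - int k)^2)) * z^(2*L+1-k)"
proof -
  have "(q^2)^(k choose 2) * (-(q^2))^k * (z * q^(2*L+1))^(2*L+1-k)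
      = (-1)^k * (q^(2 * (k choose 2)) * q^(2*k) * q^((2*L+1)*(2*L+1-k))) * z^(2*L+1-k)"
    by (simp only: power_minus[of "q^2"] power_mult_distrib power_mult[symmetric] ac_simps)
  also have "\<dots> = (-1)^k * (q^((L+1)*(3*L+1)) * q^nat ((int L - int k)^2)) * z^(2*L+1-k)"
    by (simp only: power_add[symmetric] triple_product_exponent[OF assms])
  finally show ?thesis .
qed

lemma neg_one_power_nat_abs_diff:
  "(-1::'a::ring_1) ^ nat \<bar>int a - int b\<bar> = (-1) ^ (a + b)"
proof (cases "b \<le> a")
  case True
  then have "a + b = nat \<bar>int a - int b\<bar> + 2*b" by auto
  then show ?thesis by (simp only: power_add power_mult) simp
next
  case False
  then have "a + b = nat \<bar>int a - int b\<bar> + 2*a" by auto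
  then show ?thesis by (simp only: power_add power_mult) simp
qed

(* Without the factor q^((L+1)(3L+1)) this is the usual finite triple product, but that
   factor can only be cancelled in rings where q is not a zero divisor. *)
lemma finite_triple_product:
  fixes q z :: "'a::comm_ring_1"
  shows "q^((L+1)*(3*L+1)) * (\<Sum>j\<in>{- int L - 1 .. int L}.
      (-1) ^ nat \<bar>j\<bar> * q ^ nat (j^2) * gauss_binom (q^2) (2*L+1) (nat (int L - j)) * z ^ nat (j + int L + 1))
    = q^((L+1)*(3*L+1)) * ((\<Prod>i\<le>L. z - q^(2*i+1)) * (\<Prod>i<L. 1 - z * q^(2*i+1)))"
proof -
  define N where "N = (L+1)*(3*L+1)"
  define n where "n = 2*L+1"
  define t where "t k = gauss_binom (q^2) n k * (q^2)^(k choose 2) * (-(q^2))^k * (z * q^n)^(n-k)" for k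
  have summand: "q^N * ((-1) ^ nat \<bar>int L - int k\<bar> * q ^ nat ((int L - int k)^2)
      * gauss_binom (q^2) n k * z^(n-k)) = (-1)^L * t k" if "k \<le> n" for k
  proof -
    have "t k = gauss_binom (q^2) n k * ((q^2)^(k choose 2) * (-(q^2))^k * (z * q^n)^(n-k))"
      by (simp only: t_def mult.assoc)
    also have "\<dots> = gauss_binom (q^2) n k * ((-1)^k * (q^N * q^nat ((int L - int k)^2)) * z^(n-k))"
      using that unfolding N_def n_def by (simp only: triple_product_term)
    finally show ?thesis
      by (simp add: neg_one_power_nat_abs_diff power_add ac_simps)
  qed
  have z_exponent: "n - nat (int L - j) = nat (j + int L + 1)" if "j \<in> {- int L - 1 .. int L}" for j
    using that unfolding n_def by auto
  have "(\<Sum>j\<in>{- int L - 1 .. int L}. (-1) ^ nat \<bar>j\<bar> * q ^ nat (j^2)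
      * gauss_binom (q^2) n (nat (int L - j)) * z ^ nat (j + int L + 1))
    = (\<Sum>k\<le>n. (-1) ^ nat \<bar>int L - int k\<bar> * q ^ nat ((int L - int k)^2)
      * gauss_binom (q^2) n k * z^(n-k))"
    by (rule sum.reindex_bij_witness[of _ "\<lambda>k. int L - int k" "\<lambda>j. nat (int L - j)"])
       (auto simp: n_def simp flip: z_exponent)
  then have "q^N * (\<Sum>j\<in>{- int L - 1 .. int L}. (-1) ^ nat \<bar>j\<bar> * q ^ nat (j^2)
      * gauss_binom (q^2) n (nat (int L - j)) * z ^ nat (j + int L + 1))
    = (-1)^L * (\<Sum>k\<le>n. t k)"
    by (simp add: sum_distrib_left summand)
  also have "(\<Sum>k\<le>n. t k) = (\<Prod>m<n. z * q^n + (-(q^2)) * (q^2)^m)"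
    unfolding t_def by (rule q_binomial[symmetric])
  also have "\<dots> = (\<Prod>m<2*L+1. z * q^(2*L+1) - q^(2*m+2))"
    by (simp add: n_def power_mult[symmetric] power_add[symmetric])
  also have "\<dots> = (-1)^L * q^N * ((\<Prod>i\<le>L. z - q^(2*i+1)) * (\<Prod>i<L. 1 - z * q^(2*i+1)))"
    unfolding prod_shifted_even_powers_split N_def ..
  finally show ?thesis
    unfolding N_def n_def by (simp add: mult.assoc[symmetric] flip: power_add mult_2)
qed

lemma eis_omega_prod_factor_pairs:
  fixes x :: "nat \<Rightarrow> 'a::comm_ring_1"
  shows "(\<Prod>i\<le>L. eis_omega - eis_of (x i)) * (\<Prod>i<L. 1 - eis_omega * eis_of (x i)) * eis_omega^(2*L)
     = (eis_omega - eis_of (x L)) * eis_of (\<Prod>i<L. 1 + x i + (x i)^2)"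
proof -
  have "eis_omega^(2*L) = (\<Prod>i<L. (eis_omega :: 'a eis)^2)"
    by (simp only: prod_constant card_lessThan power_mult)
  then have "(\<Prod>i\<le>L. eis_omega - eis_of (x i)) * (\<Prod>i<L. 1 - eis_omega * eis_of (x i)) * eis_omega^(2*L)
      = (eis_omega - eis_of (x L))
        * (\<Prod>i<L. (eis_omega - eis_of (x i)) * (1 - eis_omega * eis_of (x i)) * eis_omega^2)"
    by (simp add: prod.distrib lessThan_Suc_atMost[symmetric] mult_ac)
  also have "\<dots> = (eis_omega - eis_of (x L)) * eis_of (\<Prod>i<L. 1 + x i + (x i)^2)"
    by (simp only: eis_omega_factor_pair eis_of_prod)
  finally show ?thesis .
qed

lemma legendre3_add_mult_3: "legendre3 (a + 3 * b) = legendre3 a"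
  by (simp add: legendre3_def)

lemma finite_triple_product_at_omega:
  fixes q :: "'a::comm_ring_1"
  shows "q^((L+1)*(3*L+1)) * (\<Sum>j\<in>{- int L - 1 .. int L}. (-1) ^ nat \<bar>j\<bar> * q ^ nat (j^2)
      * of_int (legendre3 (j + 1)) * gauss_binom (q^2) (2*L+1) (nat (int L - j)))
    = q^((L+1)*(3*L+1)) * (\<Prod>i<L. 1 + q^(2*i+1) + (q^(2*i+1))^2)"
proof -
  define N where "N = (L+1)*(3*L+1)"
  define J where "J = {- int L - 1 .. int L}"
  define c where "c j = (-1) ^ nat \<bar>j\<bar> * q ^ nat (j^2) * gauss_binom (q^2) (2*L+1) (nat (int L - j))"
    for j
  define x where "x i = q^(2*i+1)" for i
  have "eis_of (q^N) * (\<Sum>j\<in>J. eis_of (c j) * eis_omega ^ nat (j + int L + 1))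
      = eis_of (q^N) * ((\<Prod>i\<le>L. eis_omega - eis_of (x i)) * (\<Prod>i<L. 1 - eis_omega * eis_of (x i)))"
    using finite_triple_product[of "eis_of q" L eis_omega] by (simp add: N_def J_def c_def x_def)
  from arg_cong[OF this, of "\<lambda>u. u * eis_omega ^ (2*L)"]
  have "eis_of (q^N) * (\<Sum>j\<in>J. eis_of (c j) * eis_omega ^ (nat (j + int L + 1) + 2*L))
      = eis_of (q^N) * ((\<Prod>i\<le>L. eis_omega - eis_of (x i)) * (\<Prod>i<L. 1 - eis_omega * eis_of (x i))
        * eis_omega ^ (2*L))"
    by (simp only: power_add sum_distrib_right mult.assoc)
  also have "\<dots> = eis_of (q^N) * ((eis_omega - eis_of (x L)) * eis_of (\<Prod>i<L. 1 + x i + (x i)^2))"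
    by (simp only: eis_omega_prod_factor_pairs)
  finally have "eis_of (q^N) * (\<Sum>j\<in>J. eis_of (c j) * eis_omega ^ (nat (j + int L + 1) + 2*L))
      = eis_of (q^N) * ((eis_omega - eis_of (x L)) * eis_of (\<Prod>i<L. 1 + x i + (x i)^2))" .
  from arg_cong[OF this, of eis_om]
  have at_omega: "q^N * (\<Sum>j\<in>J. c j * of_int (legendre3 (int (nat (j + int L + 1) + 2*L))))
      = q^N * (\<Prod>i<L. 1 + x i + (x i)^2)"
    by (simp only: eis_om_eis_of_mult eis_om_sum eis_om_omega_power eis_om_omega_minus_mult)
  have "(\<Sum>j\<in>J. c j * of_int (legendre3 (j + 1)))
      = (\<Sum>j\<in>J. c j * of_int (legendre3 (int (nat (j + int L + 1) + 2*L))))"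
  proof (rule sum.cong[OF refl])
    fix j assume "j \<in> J"
    then have "int (nat (j + int L + 1) + 2*L) = (j + 1) + 3 * int L"
      by (auto simp: J_def)
    then show "c j * of_int (legendre3 (j + 1))
        = c j * of_int (legendre3 (int (nat (j + int L + 1) + 2*L)))"
      by (simp only: legendre3_add_mult_3)
  qed
  with at_omega show ?thesis
    unfolding N_def J_def c_def x_def by (simp add: ac_simps)
qed

lemma qpoch_cube:
  "qpoch (a^3) (q^3) n = (\<Prod>i<n. 1 + a * q^i + (a * q^i)^2) * qpoch a q n"
proof -
  have "1 - y^3 = (1 + y + y^2) * (1 - y)" for y :: 'a
    by (simp add: power2_eq_square power3_eq_cube algebra_simps)
  moreover have "a^3 * (q^3)^i = (a * q^i)^3" for i
    by (simp only: power_mult_distrib power_mult[symmetric] mult.commute)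
  ultimately show ?thesis
    by (simp only: qpoch_def prod.distrib[symmetric])
qed

lemma qpoch_fps_nth_0:
  assumes "fps_nth a 0 = 0"
  shows "fps_nth (qpoch a q n) 0 = 1"
  using assms by (induction n) (simp_all add: qpoch_def)

lemma qpoch_fps_nonzero:
  assumes "fps_nth a 0 = 0"
  shows "qpoch a q n \<noteq> 0"
  using qpoch_fps_nth_0[OF assms, of q n] by auto

lemma qbinom_eq_gauss_binom:
  fixes p :: "'a::{idom_divide,inverse}"
  assumes "\<And>m. qpoch p p m \<noteq> 0" and "0 \<le> B" and "B \<le> A"
  shows "qbinom p A B = gauss_binom p (nat A) (nat B)"
proof -
  define m where "m = nat (A - B)"
  from assms(2,3) have A: "nat A = m + nat B"
    by (simp add: m_def)
  have "qbinom p A B = qpoch p p (nat A) / (qpoch p p (nat B) * qpoch p p m)"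
    using assms(2,3) by (simp add: qbinom_def m_def)
  also have "\<dots> = gauss_binom p (nat A) (nat B) * (qpoch p p (nat B) * qpoch p p m)
      / (qpoch p p (nat B) * qpoch p p m)"
    unfolding A by (simp only: gauss_binom_mult_qpoch)
  also have "\<dots> = gauss_binom p (nat A) (nat B)"
    using assms(1) by (intro nonzero_mult_div_cancel_right) simp
  finally show ?thesis .
qed

lemma sum_legendre3_qbinom_fps:
  "(\<Sum>j\<in>{- int L - 1 .. int L}.
      (-1) ^ nat \<bar>j\<bar> * fps_X ^ nat (j^2) * of_int (legendre3 (j + 1))
      * qbinom (fps_X ^ 2) (2 * int L + 1) (int L - j))
    = (\<Prod>i<L. 1 + fps_X^(2*i+1) + (fps_X^(2*i+1))^2 :: 'a::field fps)"
proof -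
  have nonzero: "qpoch (fps_X^2) (fps_X^2) m \<noteq> (0 :: 'a fps)" for m
    by (rule qpoch_fps_nonzero) simp
  have qbinom: "qbinom (fps_X^2) (2 * int L + 1) (int L - j)
      = gauss_binom (fps_X^2 :: 'a fps) (2*L+1) (nat (int L - j))"
    if "j \<in> {- int L - 1 .. int L}" for j
    using qbinom_eq_gauss_binom[of "fps_X^2" "int L - j" "2 * int L + 1", OF nonzero] that
    by (simp add: nat_add_distrib nat_mult_distrib)
  have "(\<Sum>j\<in>{- int L - 1 .. int L}.
      (-1) ^ nat \<bar>j\<bar> * fps_X ^ nat (j^2) * of_int (legendre3 (j + 1))
      * qbinom (fps_X ^ 2) (2 * int L + 1) (int L - j))
    = (\<Sum>j\<in>{- int L - 1 .. int L}.
      (-1) ^ nat \<bar>j\<bar> * fps_X ^ nat (j^2) * of_int (legendre3 (j + 1))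
      * gauss_binom (fps_X^2 :: 'a fps) (2*L+1) (nat (int L - j)))"
    by (rule sum.cong[OF refl]) (simp only: qbinom)
  also have "\<dots> = (\<Prod>i<L. 1 + fps_X^(2*i+1) + (fps_X^(2*i+1))^2)"
    by (rule mult_left_cancel[OF power_not_zero[OF fps_X_neq_zero], THEN iffD1,
          OF finite_triple_product_at_omega])
  finally show ?thesis .
qed

theorem theorem2p5:
  fixes L :: nat
  shows "(\<Sum>j\<in>{- int L - 1 .. int L}.
            (-1) ^ nat \<bar>j\<bar> * fps_X ^ nat (j^2) * of_int (legendre3 (j + 1))
            * qbinom (fps_X ^ 2) (2 * int L + 1) (int L - j))
         = qpoch (fps_X ^ 3) (fps_X ^ 6) L / qpoch (fps_X :: 'a::field fps) (fps_X ^ 2) L"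
proof -
  let ?X = "fps_X :: 'a fps"
  have "?X * (?X^2)^i = ?X^(2*i+1)" for i
    by (simp add: power_mult[symmetric])
  moreover have "(?X^2)^3 = ?X^6"
    by (simp flip: power_mult)
  ultimately have "qpoch (?X^3) (?X^6) L
      = (\<Prod>i<L. 1 + ?X^(2*i+1) + (?X^(2*i+1))^2) * qpoch ?X (?X^2) L"
    using qpoch_cube[of ?X "?X^2" L] by (simp only:)
  moreover have "qpoch ?X (?X^2) L \<noteq> 0"
    by (rule qpoch_fps_nonzero) simp
  ultimately show ?thesis
    unfolding sum_legendre3_qbinom_fps by simp
qed

end
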